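(* Let $p$ be a prime and let $r,\alpha,\gamma$ be positive integers with $\alpha>1$ and $p\nmid\gamma$. If $p^{\alpha}\gamma\in F_r$, then $p^{\alpha-1}\gamma\in F_r$.
   Context: For a positive integer $r$, $S_r$ is the multiplicative arithmetic function with $S_r(q^{\beta})=0$ if $q\leq r$ and $S_r(q^{\beta})=q^{\beta-1}(q-r)$ if $q>r$, for all primes $q$ and positive integers $\beta$. $B_r=\{n\in\mathbb{N}: S_r(n)>0\}$ (positive integers whose smallest prime factor exceeds $r$, together with $1$). $F_r$ is the set of $n\in B_r$ such that $S_r(n)<S_r(m)$ for all $m\in B_r$ with $m>n$. *)

theory Defs
  imports "HOL-Computational_Algebra.Primes"
begin

text \<open>S_r(0) is set to 0 (0 is not a positive integer, and we keep it out of B_r).\<close>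
definition S :: "nat \<Rightarrow> nat \<Rightarrow> int" where
  "S r n = (if n = 0 then 0 else
     (\<Prod>q\<in>prime_factors n.
        (if q \<le> r then 0 else int q ^ (multiplicity q n - 1) * (int q - int r))))"

definition B :: "nat \<Rightarrow> nat set" where
  "B r = {n. n > 0 \<and> S r n > 0}"

definition F :: "nat \<Rightarrow> nat set" where
  "F r = {n \<in> B r. \<forall>m \<in> B r. m > n \<longrightarrow> S r n < S r m}"

end

theory Submission
  imports Defs
begin

text \<open>Write \<open>n = p^(\<alpha>-1) \<gamma>\<close>, so that \<open>p n = p^\<alpha> \<gamma>\<close>. Since \<open>p\<close> already divides \<open>n\<close>,
  multiplicativity gives \<open>S_r(p n) = p S_r(n)\<close>; positivity of \<open>S_r(p n)\<close> forces \<open>p > r\<close>.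
  For every \<open>m\<close> the same computation gives \<open>S_r(p m) = p S_r(m)\<close> or \<open>(p - r) S_r(m)\<close>,
  in both cases \<open>0 < S_r(p m) \<le> p S_r(m)\<close> when \<open>S_r(m) > 0\<close>. Hence an \<open>m > n\<close> in \<open>B_r\<close>
  with \<open>S_r(m) \<le> S_r(n)\<close> would yield \<open>p m > p n\<close> in \<open>B_r\<close> with \<open>S_r(p m) \<le> S_r(p n)\<close>,
  contradicting \<open>p n \<in> F_r\<close>.\<close>

definition S_prime_power :: "nat \<Rightarrow> nat \<Rightarrow> nat \<Rightarrow> int" where
  "S_prime_power r q k = (if q \<le> r then 0 else int q ^ (k - 1) * (int q - int r))"

lemma S_eq_prod_prime_factors:
  "n > 0 \<Longrightarrow> S r n = (\<Prod>q\<in>prime_factors n. S_prime_power r q (multiplicity q n))"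
  by (simp add: S_def S_prime_power_def)

lemma S_0 [simp]: "S r 0 = 0"
  by (simp add: S_def)

lemma S_prime_power_Suc_Suc:
  "S_prime_power r q (Suc (Suc k)) = int q * S_prime_power r q (Suc k)"
  by (simp add: S_prime_power_def)

lemma S_eq_0_if_small_prime_factor:
  assumes "q \<in> prime_factors n" and "q \<le> r"
  shows "S r n = 0"
proof -
  have "n > 0" using assms(1) by (auto simp: in_prime_factors_iff)
  moreover have "S_prime_power r q (multiplicity q n) = 0"
    using assms(2) by (simp add: S_prime_power_def)
  ultimately show ?thesis
    using assms(1) by (metis S_eq_prod_prime_factors finite_set_mset prod_zero)
qed

lemma prime_factors_prime_mult:
  fixes p m :: nat
  assumes "prime p" and "m > 0"
  shows "prime_factors (p * m) = insert p (prime_factors m)"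
  using assms by (simp add: prime_factors_product prime_factorization_prime)

lemma multiplicity_prime_mult_other:
  fixes p q m :: nat
  assumes "prime p" and "prime q" and "q \<noteq> p" and "m > 0"
  shows "multiplicity q (p * m) = multiplicity q m"
  using assms by (simp add: prime_elem_multiplicity_mult_distrib prime_multiplicity_other)

lemma S_prime_mult_split:
  fixes p m r :: nat
  assumes "prime p" and "m > 0"
  shows "S r (p * m) = S_prime_power r p (Suc (multiplicity p m)) *
           (\<Prod>q\<in>prime_factors m - {p}. S_prime_power r q (multiplicity q m))"
proof -
  have "p * m > 0" using assms prime_gt_0_nat by simp
  then have "S r (p * m) = S_prime_power r p (multiplicity p (p * m)) *
      (\<Prod>q\<in>prime_factors m - {p}. S_prime_power r q (multiplicity q (p * m)))"
    using assms by (simp add: S_eq_prod_prime_factors prime_factors_prime_mult prod.insert_remove)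
  also have "multiplicity p (p * m) = Suc (multiplicity p m)"
    using assms by (intro multiplicity_times_same) (auto simp: not_prime_unit)
  also have "(\<Prod>q\<in>prime_factors m - {p}. S_prime_power r q (multiplicity q (p * m))) =
      (\<Prod>q\<in>prime_factors m - {p}. S_prime_power r q (multiplicity q m))"
  proof (rule prod.cong)
    fix q assume "q \<in> prime_factors m - {p}"
    then have "multiplicity q (p * m) = multiplicity q m"
      using assms by (intro multiplicity_prime_mult_other) (auto intro: in_prime_factors_imp_prime)
    then show "S_prime_power r q (multiplicity q (p * m)) = S_prime_power r q (multiplicity q m)"
      by simp
  qed simp
  finally show ?thesis .
qed

lemma S_prime_mult_dvd:
  fixes p m r :: nat
  assumes "prime p" and "m > 0" and "p dvd m"
  shows "S r (p * m) = int p * S r m"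
proof -
  define rest where
    "rest = (\<Prod>q\<in>prime_factors m - {p}. S_prime_power r q (multiplicity q m))"
  have "multiplicity p m > 0"
    using assms by (simp add: prime_multiplicity_gt_zero_iff)
  then obtain k where k: "multiplicity p m = Suc k"
    using gr0_implies_Suc by blast
  have "p \<in> prime_factors m"
    using assms by (auto simp: in_prime_factors_iff)
  then have S_m: "S r m = S_prime_power r p (Suc k) * rest"
    unfolding S_eq_prod_prime_factors[OF assms(2)] rest_def k[symmetric]
    by (intro prod.remove) simp_all
  have "S r (p * m) = S_prime_power r p (Suc (Suc k)) * rest"
    using S_prime_mult_split[OF assms(1,2)] by (simp add: k rest_def)
  also have "\<dots> = int p * S r m"
    by (simp add: S_prime_power_Suc_Suc S_m)
  finally show ?thesis .
qed

lemma S_prime_mult_not_dvd: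
  fixes p m r :: nat
  assumes "prime p" and "m > 0" and "\<not> p dvd m"
  shows "S r (p * m) = S_prime_power r p 1 * S r m"
proof -
  have "prime_factors m - {p} = prime_factors m"
    using assms(3) by auto
  moreover have "multiplicity p m = 0"
    using assms(3) by (rule not_dvd_imp_multiplicity_0)
  ultimately show ?thesis
    using S_prime_mult_split[OF assms(1,2)] by (simp add: S_eq_prod_prime_factors[OF assms(2)])
qed

lemma S_prime_mult_bounds:
  fixes p m r :: nat
  assumes "prime p" and "r < p" and "S r m > 0"
  shows "0 < S r (p * m)" and "S r (p * m) \<le> int p * S r m"
proof -
  have "m > 0" using assms(3) by (cases m) simp_all
  have "0 < S r (p * m) \<and> S r (p * m) \<le> int p * S r m"
  proof (cases "p dvd m")
    case True
    then show ?thesis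
      using assms \<open>m > 0\<close> prime_gt_0_nat by (simp add: S_prime_mult_dvd)
  next
    case False
    then have "S r (p * m) = (int p - int r) * S r m"
      using assms \<open>m > 0\<close> by (simp add: S_prime_mult_not_dvd S_prime_power_def)
    then show ?thesis
      using assms by (simp add: mult_right_mono)
  qed
  then show "0 < S r (p * m)" and "S r (p * m) \<le> int p * S r m" by simp_all
qed

lemma F_if_prime_mult_in_F:
  fixes p n r :: nat
  assumes "prime p" and "p dvd n" and "p * n \<in> F r"
  shows "n \<in> F r"
proof -
  have p_pos: "p > 0" using assms(1) prime_gt_0_nat by simp
  have S_pn: "S r (p * n) > 0" and "n > 0"
    using assms(3) by (auto simp: F_def B_def)
  have S_pn_eq: "S r (p * n) = int p * S r n"
    using S_prime_mult_dvd[OF assms(1) \<open>n > 0\<close> assms(2)] .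
  have "r < p"
  proof (rule ccontr)
    assume "\<not> r < p"
    moreover have "p \<in> prime_factors (p * n)"
      using assms(1) \<open>n > 0\<close> by (simp add: prime_factors_prime_mult)
    ultimately have "S r (p * n) = 0"
      by (intro S_eq_0_if_small_prime_factor) (simp_all add: not_less)
    with S_pn show False by simp
  qed
  have "n \<in> B r"
    using S_pn p_pos \<open>n > 0\<close> by (simp add: B_def S_pn_eq zero_less_mult_iff)
  moreover have "S r n < S r m" if "m \<in> B r" and "n < m" for m
  proof (rule ccontr)
    assume "\<not> S r n < S r m"
    have "S r m > 0" and "m > 0" using \<open>m \<in> B r\<close> by (auto simp: B_def)
    note bounds = S_prime_mult_bounds[OF assms(1) \<open>r < p\<close> \<open>S r m > 0\<close>]
    have "p * m \<in> B r"
      using bounds(1) \<open>m > 0\<close> p_pos by (simp add: B_def)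
    moreover have "p * n < p * m" using \<open>n < m\<close> p_pos by simp
    moreover have "S r (p * m) \<le> S r (p * n)"
    proof -
      have "int p * S r m \<le> int p * S r n"
        using \<open>\<not> S r n < S r m\<close> by (simp add: mult_left_mono)
      then show ?thesis using bounds(2) by (simp add: S_pn_eq)
    qed
    ultimately have "S r (p * n) < S r (p * m)"
      using assms(3) unfolding F_def by blast
    with \<open>S r (p * m) \<le> S r (p * n)\<close> show False by simp
  qed
  ultimately show ?thesis by (simp add: F_def)
qed

theorem lemma3p2:
  fixes p r \<alpha> \<gamma> :: nat
  assumes "prime p" and "r > 0" and "\<alpha> > 1" and "\<gamma> > 0" and "\<not> p dvd \<gamma>"
    and "p ^ \<alpha> * \<gamma> \<in> F r"
  shows "p ^ (\<alpha> - 1) * \<gamma> \<in> F r"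
proof (rule F_if_prime_mult_in_F[OF assms(1)])
  have "\<alpha> = Suc (\<alpha> - 1)" and "\<alpha> - 1 > 0"
    using assms(3) by simp_all
  then show "p dvd p ^ (\<alpha> - 1) * \<gamma>"
    by (metis dvd_mult2 dvd_power)
  show "p * (p ^ (\<alpha> - 1) * \<gamma>) \<in> F r"
    using assms(6) \<open>\<alpha> = Suc (\<alpha> - 1)\<close> by (metis mult.assoc power_Suc)
qed

end
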